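(* For any single unit-demand buyer with value distribution $\mathcal{D}$ over $m$ items and any production cost vector $c\in\mathbb{R}_+^m$, $$\textsc{BuyManyProfit}_{2c}(\mathcal{D})\leq 2\ln(4m)\,\textsc{SProfit}_{c}(\mathcal{D}).$$
   Context: Unit-demand buyer: valuation $v$ with $v_j\ge0$ per item, $v(S)=\max_{j\in S}v_j$; $\mathcal{D}$ arbitrary (correlated across items). Lotteries $\lambda\in\Delta_m=\{\lambda\in[0,1]^m:\sum_j\lambda_j\le1\}$, $v(\lambda)=\sum_jv_j\lambda_j$. A pricing function $p$ assigns a price $p(\lambda)\ge0$ to every lottery; buyer $v$ chooses $\lambda_{v,p}\in\arg\max_\lambda(v(\lambda)-p(\lambda))$ and pays $p(\lambda_{v,p})$. $p$ is buy-many if no buyer type can get higher utility by adaptively purchasing a (random) sequence of lotteries (each depending on previous outcomes), receiving the union of allocated items and paying the sum of prices, than by buying a single lottery. An item pricing is a vector $(q_1,\dots,q_m)\in\mathbb{R}_+^m$, i.e. $q(\lambda)=\sum_jq_j\lambda_j$. Given production costs $c$, the profit of pricing $p$ is $\textsc{Profit}_{p,c}(\mathcal{D})=\mathbb{E}_{v\sim\mathcal{D}}[p(\lambda_{v,p})-c\cdot\lambda_{v,p}]$; $\textsc{SProfit}_c(\mathcal{D})$ is the maximum profit over item pricings, and $\textsc{BuyManyProfit}_c(\mathcal{D})$ the maximum profit over buy-many pricings. *)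

theory Defs
  imports "HOL-Probability.Probability"
begin

(* Items are the elements of a finite type 'i; m = CARD('i).
   Valuations, lotteries, costs and item prices are functions 'i => real. *)

definition lotteries :: "('i::finite \<Rightarrow> real) set" where
  "lotteries = {l. (\<forall>j. 0 \<le> l j) \<and> (\<Sum>j\<in>UNIV. l j) \<le> 1}"

(* v(lambda) = sum_j v_j lambda_j ; also used for c . lambda and item pricings q(lambda) *)
definition lval :: "('i::finite \<Rightarrow> real) \<Rightarrow> ('i \<Rightarrow> real) \<Rightarrow> real" where
  "lval v l = (\<Sum>j\<in>UNIV. v j * l j)"

definition setval :: "('i::finite \<Rightarrow> real) \<Rightarrow> 'i set \<Rightarrow> real" where
  "setval v S = Max (insert 0 (v ` S))"

(* Expected utility of an adaptive purchasing strategy sigma, truncated to at most n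
   purchases.  A history is the list of outcomes of the lotteries bought so far
   (Some j = item j allocated, None = nothing allocated).  sigma h = None means stop,
   sigma h = Some l means buy lottery l next. *)
fun seq_util :: "('i::finite \<Rightarrow> real) \<Rightarrow> (('i \<Rightarrow> real) \<Rightarrow> real)
    \<Rightarrow> ('i option list \<Rightarrow> ('i \<Rightarrow> real) option) \<Rightarrow> nat \<Rightarrow> 'i option list \<Rightarrow> real" where
  "seq_util v p \<sigma> 0 h = setval v {j. Some j \<in> set h}"
| "seq_util v p \<sigma> (Suc n) h =
     (case \<sigma> h of
        None \<Rightarrow> setval v {j. Some j \<in> set h}
      | Some l \<Rightarrow> (\<Sum>j\<in>UNIV. l j * seq_util v p \<sigma> n (h @ [Some j]))
                  + (1 - (\<Sum>j\<in>UNIV. l j)) * seq_util v p \<sigma> n (h @ [None])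
                  - p l)"

definition buy_many :: "(('i::finite \<Rightarrow> real) \<Rightarrow> real) \<Rightarrow> bool" where
  "buy_many p \<longleftrightarrow> (\<forall>l\<in>lotteries. 0 \<le> p l) \<and>
     (\<forall>v. (\<forall>j. 0 \<le> v j) \<longrightarrow>
        (\<forall>\<sigma>. (\<forall>h l. \<sigma> h = Some l \<longrightarrow> l \<in> lotteries) \<longrightarrow>
           (\<forall>n. seq_util v p \<sigma> n [] \<le> (SUP l\<in>lotteries. lval v l - p l))))"

definition valid_choice :: "(('i::finite \<Rightarrow> real) \<Rightarrow> real) \<Rightarrow> ('i \<Rightarrow> real)
    \<Rightarrow> ('i \<Rightarrow> real) measure \<Rightarrow> (('i \<Rightarrow> real) \<Rightarrow> ('i \<Rightarrow> real)) \<Rightarrow> bool" where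
  "valid_choice p c D sel \<longleftrightarrow>
     (AE v in D. sel v \<in> lotteries \<and>
        (\<forall>l\<in>lotteries. lval v l - p l \<le> lval v (sel v) - p (sel v))) \<and>
     integrable D (\<lambda>v. p (sel v) - lval c (sel v))"

definition Profit :: "(('i::finite \<Rightarrow> real) \<Rightarrow> real) \<Rightarrow> ('i \<Rightarrow> real)
    \<Rightarrow> ('i \<Rightarrow> real) measure \<Rightarrow> (('i \<Rightarrow> real) \<Rightarrow> ('i \<Rightarrow> real)) \<Rightarrow> real" where
  "Profit p c D sel = (\<integral>v. (p (sel v) - lval c (sel v)) \<partial>D)"

definition SProfit :: "('i::finite \<Rightarrow> real) \<Rightarrow> ('i \<Rightarrow> real) measure \<Rightarrow> ereal" where
  "SProfit c D = (SUP qs \<in> {(q, sel). (\<forall>j. 0 \<le> q j) \<and> valid_choice (lval q) c D sel}.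
                    ereal (Profit (lval (fst qs)) c D (snd qs)))"

definition BuyManyProfit :: "('i::finite \<Rightarrow> real) \<Rightarrow> ('i \<Rightarrow> real) measure \<Rightarrow> ereal" where
  "BuyManyProfit c D = (SUP ps \<in> {(p, sel). buy_many p \<and> valid_choice p c D sel}.
                    ereal (Profit (fst ps) c D (snd ps)))"

end

theory Submission
  imports Defs
begin

(* For a buy-many pricing p let s j, the effective price of item j, be the infimum of
   p l / l j over lotteries l.  Buying l over and over until item j arrives shows that every
   buyer's utility under p is at least v j - s j, and p l \<ge> l j * s j gives s \<cdot> l \<le> m p l.
   Let W t be the buyer's utility under the item pricing c + t s.  Multiplying t by \<rho> lowers
   W by at most \<rho> - 1 times the profit (with cost c) of the pricing c + t s.  At t = 1,
   W is at most the utility v l - p l of the buyer's choice l under p; at t = \<rho>^-K \<le> 1/(2m),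
   W \<ge> v l - c \<cdot> l - p l / 2.  Telescoping over the grid t = \<rho>^(k-K), k < K, bounds
   p l - 2 c \<cdot> l by 2 (\<rho> - 1) times the sum of K item-pricing profits.  Any L > ln (2m),
   such as ln (4m), admits \<rho> and K with (\<rho> - 1) K = L and \<rho>^K \<ge> 2m, and the best of the
   K item pricings then yields the factor 2 L. *)

lemma sum_mult_if_eq:
  fixes l :: "'i::finite \<Rightarrow> real"
  shows "(\<Sum>i\<in>UNIV. l i * (if i = j then a else b)) = l j * a + ((\<Sum>i\<in>UNIV. l i) - l j) * b"
proof -
  have "(\<Sum>i\<in>UNIV. l i * (if i = j then a else b))
      = (\<Sum>i\<in>UNIV. l i * b + (if i = j then l i * (a - b) else 0))"
    by (rule sum.cong) (auto simp: algebra_simps)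
  also have "\<dots> = (\<Sum>i\<in>UNIV. l i) * b + l j * (a - b)"
    by (simp add: sum.distrib sum_distrib_right)
  finally show ?thesis
    by (simp add: algebra_simps)
qed

lemma ex_sum_lessThan_le_card_mult:
  fixes a :: "nat \<Rightarrow> real"
  assumes "0 < K"
  shows "\<exists>k<K. (\<Sum>i<K. a i) \<le> real K * a k"
proof -
  have ne: "a ` {..<K} \<noteq> {}"
    using assms by auto
  obtain k where k: "k < K" "a k = Max (a ` {..<K})"
    using Max_in[OF finite_imageI ne] by auto
  have "(\<Sum>i<K. a i) \<le> real (card {..<K}) * a k"
    using k by (intro sum_bounded_above) simp
  with k show ?thesis
    by auto
qed

lemma ex_le_one_plus_div_power:
  assumes "a < exp L"
  shows "\<exists>K::nat. 0 < K \<and> a \<le> (1 + L / real K) ^ K"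
proof -
  have "eventually (\<lambda>n. a < (1 + L / real n) ^ n) sequentially"
    using tendsto_exp_limit_sequentially assms by (rule order_tendstoD(1))
  then obtain N where "\<And>n. n \<ge> N \<Longrightarrow> a < (1 + L / real n) ^ n"
    unfolding eventually_sequentially by blast
  then have "a \<le> (1 + L / real (Suc N)) ^ Suc N"
    by (meson le_SucI less_imp_le order_refl)
  then show ?thesis
    by blast
qed

definition unit_lottery :: "'i \<Rightarrow> ('i \<Rightarrow> real)" where
  "unit_lottery j = (\<lambda>i. if i = j then 1 else 0)"

lemma unit_lottery_in_lotteries: "unit_lottery j \<in> lotteries"
  unfolding lotteries_def unit_lottery_def by simp

lemma zero_in_lotteries: "(\<lambda>_. 0) \<in> lotteries"
  unfolding lotteries_def by simp

lemma lval_unit_lottery [simp]: "lval x (unit_lottery j) = x j"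
  unfolding lval_def unit_lottery_def by (simp add: if_distrib cong: if_cong)

lemma lval_zero [simp]: "lval x (\<lambda>_. 0) = 0"
  unfolding lval_def by simp

lemma lval_add_scaled: "lval (\<lambda>j. c j + t * s j) l = lval c l + t * lval s l"
  unfolding lval_def by (simp add: algebra_simps sum.distrib sum_distrib_left)

lemma lval_scale: "lval (\<lambda>j. a * x j) l = a * lval x l"
  unfolding lval_def by (simp add: sum_distrib_left mult.assoc)

lemma lval_diff: "lval v l - lval r l = lval (\<lambda>j. v j - r j) l"
  unfolding lval_def by (simp add: sum_subtractf[symmetric] algebra_simps)

lemma lval_le_bound:
  assumes "l \<in> lotteries" "\<And>j. x j \<le> M" "0 \<le> M"
  shows "lval x l \<le> M"
proof -
  have "lval x l \<le> (\<Sum>j\<in>UNIV. M * l j)"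
    using assms unfolding lotteries_def lval_def by (intro sum_mono mult_right_mono) auto
  also have "\<dots> = M * (\<Sum>j\<in>UNIV. l j)"
    by (simp add: sum_distrib_left)
  also have "\<dots> \<le> M"
    using assms unfolding lotteries_def by (simp add: mult_left_le)
  finally show ?thesis .
qed

(* Ties between items of maximal surplus are broken by to_nat, which keeps the choice
   measurable in v. *)
definition best_item :: "('i::finite \<Rightarrow> real) \<Rightarrow> ('i \<Rightarrow> real) \<Rightarrow> 'i \<Rightarrow> bool" where
  "best_item r v j \<longleftrightarrow> 0 < v j - r j \<and> (\<forall>i. v i - r i \<le> v j - r j) \<and>
     (\<forall>i. to_nat i < to_nat j \<longrightarrow> v i - r i < v j - r j)"

definition item_choice :: "('i::finite \<Rightarrow> real) \<Rightarrow> ('i \<Rightarrow> real) \<Rightarrow> ('i \<Rightarrow> real)" where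
  "item_choice r v = (\<lambda>j. if best_item r v j then 1 else 0)"

lemma best_item_unique:
  assumes "best_item r v j" "best_item r v i"
  shows "i = j"
proof (rule ccontr)
  assume "i \<noteq> j"
  then have "to_nat i \<noteq> to_nat j"
    by simp
  then consider "to_nat i < to_nat j" | "to_nat j < to_nat i"
    by linarith
  then show False
    using assms unfolding best_item_def by (metis not_less)
qed

lemma best_item_exists:
  fixes r v :: "'i::finite \<Rightarrow> real"
  assumes "0 < v j - r j"
  obtains k where "best_item r v k"
proof -
  define M where "M = Max (range (\<lambda>i. v i - r i))"
  have le_M: "v i - r i \<le> M" for i
    unfolding M_def by (rule Max_ge) auto
  have "M \<in> range (\<lambda>i. v i - r i)"
    unfolding M_def by (rule Max_in) auto
  then obtain i0 where "v i0 - r i0 = M"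
    by auto
  then obtain k where k: "v k - r k = M"
    and least: "\<And>i. v i - r i = M \<Longrightarrow> to_nat k \<le> to_nat i"
    using ex_has_least_nat[of "\<lambda>i. v i - r i = M" i0 to_nat] by blast
  have "best_item r v k"
    unfolding best_item_def
  proof (intro conjI allI impI)
    show "0 < v k - r k"
      using assms le_M[of j] k by linarith
    show "v i - r i \<le> v k - r k" for i
      using le_M[of i] k by simp
    show "v i - r i < v k - r k" if "to_nat i < to_nat k" for i
      using le_M[of i] k least[of i] that by fastforce
  qed
  then show thesis ..
qed

lemma item_choice_cases:
  fixes r v :: "'i::finite \<Rightarrow> real"
  obtains j where "item_choice r v = unit_lottery j" "\<forall>i. v i - r i \<le> v j - r j" "0 < v j - r j"
  | "item_choice r v = (\<lambda>_. 0)" "\<forall>i. v i - r i \<le> 0"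
proof (cases "\<exists>k. best_item r v k")
  case True
  then obtain k where k: "best_item r v k"
    by blast
  have "item_choice r v = unit_lottery k"
  proof
    fix i
    have "best_item r v i \<longleftrightarrow> i = k"
      using best_item_unique[OF k, of i] k by blast
    then show "item_choice r v i = unit_lottery k i"
      unfolding item_choice_def unit_lottery_def by simp
  qed
  moreover have "\<forall>i. v i - r i \<le> v k - r k" "0 < v k - r k"
    using k unfolding best_item_def by auto
  ultimately show thesis
    by (rule that(1))
next
  case False
  have "v i - r i \<le> 0" for i
  proof (rule ccontr)
    assume "\<not> v i - r i \<le> 0"
    then have "0 < v i - r i"
      by simp
    then obtain k where "best_item r v k"
      by (rule best_item_exists)
    with False show False
      by blast
  qed
  moreover have "item_choice r v = (\<lambda>_. 0)"
    using False unfolding item_choice_def by auto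
  ultimately show thesis
    using that(2) by blast
qed

lemma item_choice_in_lotteries: "item_choice r v \<in> lotteries"
  by (cases rule: item_choice_cases[of r v]) (simp_all add: unit_lottery_in_lotteries zero_in_lotteries)

lemma item_choice_optimal:
  assumes "l \<in> lotteries"
  shows "lval v l - lval r l \<le> lval v (item_choice r v) - lval r (item_choice r v)"
proof (cases rule: item_choice_cases[of r v])
  case (1 j)
  then show ?thesis
    using lval_le_bound[OF assms, of "\<lambda>i. v i - r i" "v j - r j"] by (simp add: lval_diff)
next
  case 2
  then show ?thesis
    using lval_le_bound[OF assms, of "\<lambda>i. v i - r i" 0] by (simp add: lval_diff)
qed

lemma borel_measurable_lval_item_choice:
  "(\<lambda>v. lval x (item_choice r v)) \<in> borel_measurable (borel :: ('i::finite \<Rightarrow> real) measure)"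
proof -
  have surplus: "(\<lambda>v::'i \<Rightarrow> real. v i - r i) \<in> borel_measurable borel" for i
    by (intro borel_measurable_diff borel_measurable_continuous_onI
        continuous_on_product_coordinates borel_measurable_const)
  have "Measurable.pred borel (\<lambda>v. best_item r v j)" for j
    unfolding best_item_def pred_def
    by (intro sets.sets_Collect_conj sets.sets_Collect_countable_All sets.sets_Collect_imp
        borel_measurable_le borel_measurable_less surplus borel_measurable_const)
  then show ?thesis
    unfolding lval_def item_choice_def
    by (intro borel_measurable_sum borel_measurable_times borel_measurable_const measurable_If)
      (auto simp: pred_def)
qed

definition item_utility :: "('i::finite \<Rightarrow> real) \<Rightarrow> ('i \<Rightarrow> real) \<Rightarrow> real" where
  "item_utility r v = lval v (item_choice r v) - lval r (item_choice r v)"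

definition item_profit :: "('i::finite \<Rightarrow> real) \<Rightarrow> ('i \<Rightarrow> real) \<Rightarrow> ('i \<Rightarrow> real) \<Rightarrow> real" where
  "item_profit r c v = lval r (item_choice r v) - lval c (item_choice r v)"

lemma item_utility_ge: "l \<in> lotteries \<Longrightarrow> lval v l - lval r l \<le> item_utility r v"
  unfolding item_utility_def by (rule item_choice_optimal)

lemma item_utility_cases: "item_utility r v = 0 \<or> (\<exists>j. item_utility r v = v j - r j)"
  by (cases rule: item_choice_cases[of r v]) (auto simp: item_utility_def)

lemma item_utility_diff_le:
  "item_utility r v - item_utility r' v \<le> lval r' (item_choice r v) - lval r (item_choice r v)"
  using item_utility_ge[OF item_choice_in_lotteries, where r=r' and v=v]
  unfolding item_utility_def by (simp add: algebra_simps)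

lemma item_utility_telescope:
  "item_utility (\<lambda>j. c j + t * s j) v - item_utility (\<lambda>j. c j + \<rho> ^ K * t * s j) v
     \<le> (\<rho> - 1) * (\<Sum>k<K. item_profit (\<lambda>j. c j + \<rho> ^ k * t * s j) c v)"
proof -
  define W where "W k = item_utility (\<lambda>j. c j + \<rho> ^ k * t * s j) v" for k
  have step: "W k - W (Suc k) \<le> (\<rho> - 1) * item_profit (\<lambda>j. c j + \<rho> ^ k * t * s j) c v" for k
    using item_utility_diff_le[of "\<lambda>j. c j + \<rho> ^ k * t * s j" v "\<lambda>j. c j + \<rho> ^ Suc k * t * s j"]
    unfolding W_def item_profit_def lval_add_scaled by (simp add: algebra_simps)
  have "W 0 - W K = (\<Sum>k<K. W k - W (Suc k))"
    by (rule sum_lessThan_telescope'[symmetric])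
  also have "\<dots> \<le> (\<rho> - 1) * (\<Sum>k<K. item_profit (\<lambda>j. c j + \<rho> ^ k * t * s j) c v)"
    unfolding sum_distrib_left by (intro sum_mono step)
  finally show ?thesis
    unfolding W_def by simp
qed

lemma integrable_item_profit:
  assumes "finite_measure D" "sets D = sets borel"
  shows "integrable D (item_profit r c)"
proof -
  have "item_profit r c \<in> borel_measurable borel"
    unfolding item_profit_def by (intro borel_measurable_diff borel_measurable_lval_item_choice)
  then have measurable: "item_profit r c \<in> borel_measurable D"
    using measurable_cong_sets[OF assms(2) refl] by blast
  have "norm (item_profit r c v) \<le> (\<Sum>j\<in>UNIV. \<bar>r j - c j\<bar>)" for v
  proof (cases rule: item_choice_cases[of r v])
    case (1 j)
    then show ?thesis
      unfolding item_profit_def using member_le_sum[of j UNIV "\<lambda>j. \<bar>r j - c j\<bar>"] by simp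
  next
    case 2
    then show ?thesis
      unfolding item_profit_def by (simp add: sum_nonneg)
  qed
  then show ?thesis
    using finite_measure.integrable_const_bound[OF assms(1)] measurable by blast
qed

lemma SProfit_ge_item_profit:
  assumes "finite_measure D" "sets D = sets borel" "\<forall>j. 0 \<le> r j"
  shows "ereal (\<integral>v. item_profit r c v \<partial>D) \<le> SProfit c D"
proof -
  have "valid_choice (lval r) c D (item_choice r)"
    unfolding valid_choice_def
    using integrable_item_profit[OF assms(1,2), of r c, unfolded item_profit_def]
    by (auto simp: item_choice_in_lotteries item_choice_optimal item_profit_def)
  with assms(3) have "ereal (Profit (lval r) c D (item_choice r)) \<le> SProfit c D"
    unfolding SProfit_def by (intro SUP_upper2[of "(r, item_choice r)"]) auto
  then show ?thesis
    unfolding Profit_def item_profit_def .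
qed

lemma buy_many_nonneg: "buy_many p \<Longrightarrow> l \<in> lotteries \<Longrightarrow> 0 \<le> p l"
  unfolding buy_many_def by blast

lemma buy_many_seq_util_le:
  assumes "buy_many p" "\<forall>j. 0 \<le> v j" "\<forall>h l. \<sigma> h = Some l \<longrightarrow> l \<in> lotteries"
  shows "seq_util v p \<sigma> n [] \<le> (SUP l\<in>lotteries. lval v l - p l)"
  using assms unfolding buy_many_def by blast

lemma setval_nonneg: "0 \<le> setval v S"
  unfolding setval_def by (rule Max_ge) auto

lemma setval_ge: "j \<in> S \<Longrightarrow> v j \<le> setval v S"
  unfolding setval_def by (rule Max_ge) auto

lemma buy_many_utility_nonneg:
  assumes "buy_many p" "\<forall>j. 0 \<le> v j"
  shows "0 \<le> (SUP l\<in>lotteries. lval v l - p l)"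
  using buy_many_seq_util_le[OF assms, of "\<lambda>_. None" 0] by (simp add: setval_def)

(* Each round of "buy l until item j arrives" yields j with probability l j, so after n rounds
   the buyer holds j with probability 1 - (1 - l j)^n and has paid p l / l j times that
   probability in expectation. *)
lemma seq_util_buy_until_item:
  fixes v l :: "'i::finite \<Rightarrow> real"
  assumes l: "l \<in> lotteries" and pos: "0 < l j" and "Some j \<notin> set h"
  shows "(v j - p l / l j) * (1 - (1 - l j) ^ n)
           \<le> seq_util v p (\<lambda>h. if Some j \<in> set h then None else Some l) n h"
  using assms(3)
proof (induction n arbitrary: h)
  case 0
  then show ?case
    by (simp add: setval_nonneg)
next
  case (Suc n)
  define \<sigma> where "\<sigma> = (\<lambda>h. if Some j \<in> set h then (None :: ('i \<Rightarrow> real) option) else Some l)"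
  define g where "g = (v j - p l / l j) * (1 - (1 - l j) ^ n)"
  have l_nonneg: "0 \<le> l i" for i
    using l unfolding lotteries_def by auto
  have l_sum: "(\<Sum>i\<in>UNIV. l i) \<le> 1"
    using l unfolding lotteries_def by auto
  have got_j: "v j \<le> seq_util v p \<sigma> n (h @ [Some j])"
    by (cases n) (simp_all add: \<sigma>_def setval_ge)
  have item: "l i * (if i = j then v j else g) \<le> l i * seq_util v p \<sigma> n (h @ [Some i])" for i
    using got_j Suc.IH[of "h @ [Some i]"] Suc.prems l_nonneg[of i]
    unfolding \<sigma>_def g_def by (auto intro: mult_left_mono)
  have "g \<le> seq_util v p \<sigma> n (h @ [None])"
    using Suc.IH[of "h @ [None]"] Suc.prems unfolding \<sigma>_def g_def by simp
  then have no_item: "(1 - (\<Sum>i\<in>UNIV. l i)) * g \<le> (1 - (\<Sum>i\<in>UNIV. l i)) * seq_util v p \<sigma> n (h @ [None])"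
    by (rule mult_left_mono) (use l_sum in simp)
  have "(v j - p l / l j) * (1 - (1 - l j) ^ Suc n) = l j * v j + (1 - l j) * g - p l"
    unfolding g_def using pos by (simp add: field_simps)
  also have "\<dots> = (\<Sum>i\<in>UNIV. l i * (if i = j then v j else g)) + (1 - (\<Sum>i\<in>UNIV. l i)) * g - p l"
    by (simp add: sum_mult_if_eq algebra_simps)
  also have "\<dots> \<le> (\<Sum>i\<in>UNIV. l i * seq_util v p \<sigma> n (h @ [Some i]))
      + (1 - (\<Sum>i\<in>UNIV. l i)) * seq_util v p \<sigma> n (h @ [None]) - p l"
    by (intro diff_right_mono add_mono sum_mono item no_item)
  also have "\<dots> = seq_util v p \<sigma> (Suc n) h"
    using Suc.prems by (simp add: \<sigma>_def)
  finally show ?case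
    unfolding \<sigma>_def .
qed

lemma buy_many_utility_ge_unit_price:
  fixes v l :: "'i::finite \<Rightarrow> real"
  assumes bm: "buy_many p" and v: "\<forall>j. 0 \<le> v j" and l: "l \<in> lotteries" and pos: "0 < l j"
  shows "v j - p l / l j \<le> (SUP l\<in>lotteries. lval v l - p l)"
proof -
  have "l j \<le> (\<Sum>i\<in>UNIV. l i)"
    using l unfolding lotteries_def by (intro member_le_sum) auto
  then have "l j \<le> 1"
    using l unfolding lotteries_def by auto
  then have "(\<lambda>n. (v j - p l / l j) * (1 - (1 - l j) ^ n)) \<longlonglongrightarrow> (v j - p l / l j) * (1 - 0)"
    using pos by (intro tendsto_intros LIMSEQ_power_zero) auto
  moreover have "(v j - p l / l j) * (1 - (1 - l j) ^ n) \<le> (SUP l\<in>lotteries. lval v l - p l)" for n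
  proof -
    have "(v j - p l / l j) * (1 - (1 - l j) ^ n)
        \<le> seq_util v p (\<lambda>h. if Some j \<in> set h then None else Some l) n []"
      using seq_util_buy_until_item[OF l pos] by simp
    also have "\<dots> \<le> (SUP l\<in>lotteries. lval v l - p l)"
      using l by (intro buy_many_seq_util_le[OF bm v]) auto
    finally show ?thesis .
  qed
  ultimately show ?thesis
    by (intro LIMSEQ_le_const2) auto
qed

definition effective_price :: "(('i::finite \<Rightarrow> real) \<Rightarrow> real) \<Rightarrow> 'i \<Rightarrow> real" where
  "effective_price p j = Inf ((\<lambda>l. p l / l j) ` {l \<in> lotteries. 0 < l j})"

lemma unit_prices_nonempty: "(\<lambda>l. p l / l j) ` {l \<in> lotteries. 0 < l j} \<noteq> {}"
  using unit_lottery_in_lotteries[of j] by (auto simp: unit_lottery_def)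

lemma unit_prices_bdd_below:
  "buy_many p \<Longrightarrow> bdd_below ((\<lambda>l. p l / l j) ` {l \<in> lotteries. 0 < l j})"
  by (intro bdd_belowI[of _ 0]) (auto simp: buy_many_nonneg)

lemma effective_price_nonneg: "buy_many p \<Longrightarrow> 0 \<le> effective_price p j"
  unfolding effective_price_def using unit_prices_nonempty
  by (intro cInf_greatest) (auto simp: buy_many_nonneg)

lemma mult_effective_price_le:
  assumes bm: "buy_many p" and l: "l \<in> lotteries"
  shows "l j * effective_price p j \<le> p l"
proof (cases "l j = 0")
  case True
  then show ?thesis
    using buy_many_nonneg[OF assms] by simp
next
  case False
  then have pos: "0 < l j"
    using l unfolding lotteries_def by (simp add: order_less_le)
  then have "effective_price p j \<le> p l / l j"
    unfolding effective_price_def using unit_prices_bdd_below[OF bm] l by (intro cInf_lower) auto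
  then show ?thesis
    using pos by (simp add: pos_le_divide_eq mult.commute)
qed

lemma lval_effective_price_le:
  assumes "buy_many p" "l \<in> lotteries"
  shows "lval (effective_price p) l \<le> real CARD('i) * p (l :: 'i::finite \<Rightarrow> real)"
proof -
  have "lval (effective_price p) l \<le> (\<Sum>j\<in>(UNIV :: 'i set). p l)"
    unfolding lval_def using mult_effective_price_le[OF assms] by (intro sum_mono) (simp add: mult.commute)
  then show ?thesis
    by simp
qed

lemma buy_many_utility_ge_effective_price:
  fixes v :: "'i::finite \<Rightarrow> real"
  assumes bm: "buy_many p" and v: "\<forall>j. 0 \<le> v j"
  shows "v j - effective_price p j \<le> (SUP l\<in>lotteries. lval v l - p l)"
proof -
  have "v j - (SUP l\<in>lotteries. lval v l - p l) \<le> effective_price p j"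
    unfolding effective_price_def using unit_prices_nonempty
    by (intro cInf_greatest) (auto dest: buy_many_utility_ge_unit_price[OF bm v])
  then show ?thesis
    by simp
qed

lemma item_utility_effective_price_le:
  fixes v :: "'i::finite \<Rightarrow> real"
  assumes "buy_many p" "\<forall>j. 0 \<le> v j" "\<forall>j. 0 \<le> c j"
  shows "item_utility (\<lambda>j. c j + effective_price p j) v \<le> (SUP l\<in>lotteries. lval v l - p l)"
proof (cases "item_utility (\<lambda>j. c j + effective_price p j) v = 0")
  case True
  then show ?thesis
    using buy_many_utility_nonneg[OF assms(1,2)] by simp
next
  case False
  then obtain j where "item_utility (\<lambda>j. c j + effective_price p j) v = v j - (c j + effective_price p j)"
    using item_utility_cases by blast
  then show ?thesis
    using buy_many_utility_ge_effective_price[OF assms(1,2), of j] assms(3)[rule_format, of j] by linarith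
qed

lemma buy_many_margin_le_item_profits:
  fixes v :: "'i::finite \<Rightarrow> real"
  assumes bm: "buy_many p" and v: "\<forall>j. 0 \<le> v j" and c: "\<forall>j. 0 \<le> c j"
    and lam: "lam \<in> lotteries" and opt: "\<forall>l\<in>lotteries. lval v l - p l \<le> lval v lam - p lam"
    and \<rho>: "1 \<le> \<rho>" and K: "2 * real CARD('i) \<le> \<rho> ^ K"
  shows "p lam - lval (\<lambda>j. 2 * c j) lam
    \<le> 2 * (\<rho> - 1) * (\<Sum>k<K. item_profit (\<lambda>j. c j + \<rho> ^ k / \<rho> ^ K * effective_price p j) c v)"
proof -
  define s where "s = effective_price p"
  define t where "t = 1 / \<rho> ^ K"
  have \<rho>K_pos: "0 < \<rho> ^ K"
    using \<rho> by simp
  have "(SUP l\<in>lotteries. lval v l - p l) = lval v lam - p lam"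
    using lam opt by (intro cSup_eq_maximum) auto
  moreover have "\<rho> ^ K * t = 1"
    using \<rho> unfolding t_def by simp
  ultimately have upper: "item_utility (\<lambda>j. c j + \<rho> ^ K * t * s j) v \<le> lval v lam - p lam"
    using item_utility_effective_price_le[OF bm v c] unfolding s_def by simp
  have "0 \<le> t"
    using \<rho>K_pos unfolding t_def by simp
  then have "t * lval s lam \<le> t * (real CARD('i) * p lam)"
    unfolding s_def using lval_effective_price_le[OF bm lam] by (rule mult_left_mono[rotated])
  also have "\<dots> \<le> p lam / 2"
    using K \<rho>K_pos buy_many_nonneg[OF bm lam] unfolding t_def
    by (simp add: field_simps mult_left_mono)
  finally have "lval v lam - lval c lam - p lam / 2 \<le> item_utility (\<lambda>j. c j + t * s j) v"
    using item_utility_ge[OF lam, of v "\<lambda>j. c j + t * s j"] unfolding lval_add_scaled by linarith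
  with upper have "p lam - lval (\<lambda>j. 2 * c j) lam
      \<le> 2 * (item_utility (\<lambda>j. c j + t * s j) v - item_utility (\<lambda>j. c j + \<rho> ^ K * t * s j) v)"
    unfolding lval_scale by argo
  also have "\<dots> \<le> 2 * ((\<rho> - 1) * (\<Sum>k<K. item_profit (\<lambda>j. c j + \<rho> ^ k * t * s j) c v))"
    using item_utility_telescope[of c t s v \<rho> K] by simp
  finally show ?thesis
    unfolding s_def t_def mult.assoc[of 2 "\<rho> - 1"] by (simp only: times_divide_eq_right mult_1_right)
qed

lemma Profit_le_sum_item_profits:
  fixes D :: "('i::finite \<Rightarrow> real) measure"
  assumes D: "prob_space D" "sets D = sets borel" and v: "AE v in D. \<forall>j. 0 \<le> v j"
    and c: "\<forall>j. 0 \<le> c j" and bm: "buy_many p" and sel: "valid_choice p (\<lambda>j. 2 * c j) D sel"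
    and \<rho>: "1 \<le> \<rho>" and K: "2 * real CARD('i) \<le> \<rho> ^ K"
  shows "Profit p (\<lambda>j. 2 * c j) D sel
    \<le> 2 * (\<rho> - 1) * (\<Sum>k<K. \<integral>v. item_profit (\<lambda>j. c j + \<rho> ^ k / \<rho> ^ K * effective_price p j) c v \<partial>D)"
proof -
  let ?r = "\<lambda>k j. c j + \<rho> ^ k / \<rho> ^ K * effective_price p j"
  have integrable: "integrable D (item_profit (?r k) c)" for k
    using D by (intro integrable_item_profit prob_space.finite_measure)
  have "AE v in D. sel v \<in> lotteries \<and> (\<forall>l\<in>lotteries. lval v l - p l \<le> lval v (sel v) - p (sel v))"
    using sel unfolding valid_choice_def by blast
  then have "AE v in D. p (sel v) - lval (\<lambda>j. 2 * c j) (sel v)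
      \<le> 2 * (\<rho> - 1) * (\<Sum>k<K. item_profit (?r k) c v)"
    using v
  proof eventually_elim
    case (elim v)
    then show ?case
      by (intro buy_many_margin_le_item_profits[OF bm _ c _ _ \<rho> K]) auto
  qed
  then have "Profit p (\<lambda>j. 2 * c j) D sel \<le> (\<integral>v. 2 * (\<rho> - 1) * (\<Sum>k<K. item_profit (?r k) c v) \<partial>D)"
    unfolding Profit_def using sel integrable unfolding valid_choice_def by (intro integral_mono_AE) auto
  also have "\<dots> = 2 * (\<rho> - 1) * (\<Sum>k<K. \<integral>v. item_profit (?r k) c v \<partial>D)"
    using integrable by simp
  finally show ?thesis .
qed

lemma buy_many_Profit_le_SProfit:
  fixes D :: "('i::finite \<Rightarrow> real) measure"
  assumes D: "prob_space D" "sets D = sets borel" and v: "AE v in D. \<forall>j. 0 \<le> v j"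
    and c: "\<forall>j. 0 \<le> c j" and bm: "buy_many p" and sel: "valid_choice p (\<lambda>j. 2 * c j) D sel"
    and L: "2 * real CARD('i) < exp L"
  shows "ereal (Profit p (\<lambda>j. 2 * c j) D sel) \<le> ereal (2 * L) * SProfit c D"
proof -
  obtain K :: nat where K: "0 < K" "2 * real CARD('i) \<le> (1 + L / real K) ^ K"
    using ex_le_one_plus_div_power[OF L] by blast
  have "1 \<le> real CARD('i)"
    by simp
  then have "1 < exp L"
    using L by linarith
  then have L_pos: "0 < L"
    by simp
  define \<rho> where "\<rho> = 1 + L / real K"
  define I where "I k = (\<integral>v. item_profit (\<lambda>j. c j + \<rho> ^ k / \<rho> ^ K * effective_price p j) c v \<partial>D)" for k
  have \<rho>: "1 \<le> \<rho>" "(\<rho> - 1) * real K = L"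
    using K(1) L_pos unfolding \<rho>_def by simp_all
  obtain k where "k < K" and best: "(\<Sum>i<K. I i) \<le> real K * I k"
    using ex_sum_lessThan_le_card_mult[OF K(1)] by blast
  have "Profit p (\<lambda>j. 2 * c j) D sel \<le> 2 * (\<rho> - 1) * (\<Sum>i<K. I i)"
    unfolding I_def using Profit_le_sum_item_profits[OF D v c bm sel \<rho>(1) K(2)[folded \<rho>_def]] .
  also have "\<dots> \<le> 2 * (\<rho> - 1) * (real K * I k)"
    using best \<rho>(1) by (intro mult_left_mono) auto
  also have "\<dots> = 2 * L * I k"
    unfolding \<rho>(2)[symmetric] by (simp only: mult.assoc mult.left_commute)
  finally have "ereal (Profit p (\<lambda>j. 2 * c j) D sel) \<le> ereal (2 * L) * ereal (I k)"
    by simp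
  also have "\<dots> \<le> ereal (2 * L) * SProfit c D"
    unfolding I_def using D c \<rho>(1) effective_price_nonneg[OF bm] L_pos
    by (intro ereal_mult_left_mono SProfit_ge_item_profit prob_space.finite_measure) auto
  finally show ?thesis .
qed

theorem theorem6:
  fixes D :: "('i::finite \<Rightarrow> real) measure" and c :: "'i \<Rightarrow> real"
  assumes "prob_space D"
    and "sets D = sets borel"
    and "AE v in D. \<forall>j. 0 \<le> v j"
    and "\<forall>j. 0 \<le> c j"
  shows "BuyManyProfit (\<lambda>j. 2 * c j) D
           \<le> ereal (2 * ln (4 * real CARD('i))) * SProfit c D"
  unfolding BuyManyProfit_def
proof (rule SUP_least, clarify)
  fix p sel
  assume "buy_many p" "valid_choice p (\<lambda>j. 2 * c j) D sel"
  moreover have "2 * real CARD('i) < exp (ln (4 * real CARD('i)))"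
    by simp
  ultimately show "ereal (Profit (fst (p, sel)) (\<lambda>j. 2 * c j) D (snd (p, sel)))
      \<le> ereal (2 * ln (4 * real CARD('i))) * SProfit c D"
    using buy_many_Profit_le_SProfit[OF assms] by simp
qed

end
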